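(* Let $X$ be a diffeological space with a linearization $(\nu,\delta)$ with respect to a vector pseudo-bundle $E$ over $X$, and a function $gap:E\to\mathbb{R}$ satisfying Assumption D. Let $f:X\to X$ be smooth, let $\operatorname{fix}(f)$ be the set of fixed points of $f$, and define $F:X\to\mathbb{R}$ by $F(x)=gap\big(\nu(x,f(x))\big)$. Then $F$ is smooth on $X\setminus\operatorname{fix}(f)$ (with the subset diffeology).
   Context: $T^*X$ is the diffeological cotangent pseudo-bundle; $E$ is a diffeological vector pseudo-bundle with projection $\pi_E$ containing $T^*X$ via a pseudo-bundle morphism. A linearization is a pair $(\nu,\delta)$ with: (1) $\delta:E\to X\times X$ smooth; (2) $(\delta|_{T^*X})^{-1}(\Delta(X))$ is the zero section of $T^*X$ and $p_1\circ\delta=\pi_E$ ($p_1$ the first projection, $\Delta(X)$ the diagonal); (3) $\nu:X\times X\to E$ smooth; (4) $\nu(x,y)=0$ iff $x=y$; (5) for all $x$, the derivative of $y\mapsto\nu(x,y)$ at $y=x$ is nonzero; (6) $\pi_E\circ\nu=p_1$; (7) for every $x$, the induced map from $T^*X$ to $T^*X$ by $(\delta\circ\nu)(x,\cdot)$ restricts to an injective map on $T^*_xX$. Assumption D: the restriction of $gap$ to $E\setminus X$ ($X$ identified with the zero section) is smooth; $gap(v)=0$ iff $v$ is the zero vector of its fiber; $gap$ is continuous for the D-topology and bounded on $X$. *)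

theory Defs
  imports "HOL-Analysis.Analysis"
begin

type_synonym rvec = "nat \<Rightarrow> real"

definition Rn :: "nat \<Rightarrow> rvec set" where
  "Rn n = {x. \<forall>i\<ge>n. x i = 0}"

text \<open>Open subsets of R^n (the product topology on nat => real restricted to Rn n
  is the Euclidean topology of R^n).\<close>
definition open_Rn :: "nat \<Rightarrow> rvec set \<Rightarrow> bool" where
  "open_Rn n U \<longleftrightarrow> openin (top_of_set (Rn n)) U"

definition partial :: "nat \<Rightarrow> (rvec \<Rightarrow> real) \<Rightarrow> rvec \<Rightarrow> real" where
  "partial i g = (\<lambda>x. deriv (\<lambda>t. g (x(i := x i + t))) 0)"

fun iter_partial :: "nat list \<Rightarrow> (rvec \<Rightarrow> real) \<Rightarrow> rvec \<Rightarrow> real" where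
  "iter_partial [] g = g"
| "iter_partial (i # is) g = partial i (iter_partial is g)"

definition smooth_real :: "nat \<Rightarrow> rvec set \<Rightarrow> (rvec \<Rightarrow> real) \<Rightarrow> bool" where
  "smooth_real n U g \<longleftrightarrow>
     (\<forall>ds. set ds \<subseteq> {..<n} \<longrightarrow>
        continuous_on U (iter_partial ds g) \<and>
        (\<forall>x\<in>U. \<forall>i<n. (\<lambda>t. iter_partial ds g (x(i := x i + t))) differentiable (at 0)))"

definition euclid_smooth :: "nat \<Rightarrow> rvec set \<Rightarrow> nat \<Rightarrow> rvec set \<Rightarrow> (rvec \<Rightarrow> rvec) \<Rightarrow> bool" where
  "euclid_smooth m V n U h \<longleftrightarrow> open_Rn m V \<and> open_Rn n U \<and> h ` V \<subseteq> U \<and>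
     (\<forall>j<n. smooth_real m V (\<lambda>v. h v j))"

text \<open>A parametrization is a triple (n, U, p) with U an open subset of R^n and p : U -> X.
  A diffeology on a carrier X is a set of parametrizations (the plots).\<close>
type_synonym 'a plots = "(nat \<times> rvec set \<times> (rvec \<Rightarrow> 'a)) set"

definition diffeological :: "'a set \<Rightarrow> 'a plots \<Rightarrow> bool" where
  "diffeological X D \<longleftrightarrow>
     (\<forall>(n, U, p)\<in>D. open_Rn n U \<and> p ` U \<subseteq> X) \<and>
     (\<forall>n U p q. (n, U, p) \<in> D \<longrightarrow> (\<forall>u\<in>U. q u = p u) \<longrightarrow> (n, U, q) \<in> D) \<and>
     \<comment> \<open>covering: constant parametrizations are plots\<close>
     (\<forall>n U x. open_Rn n U \<longrightarrow> x \<in> X \<longrightarrow> (n, U, \<lambda>_. x) \<in> D) \<and>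
     \<comment> \<open>locality\<close>
     (\<forall>n U p. open_Rn n U \<longrightarrow> p ` U \<subseteq> X \<longrightarrow>
        (\<forall>u\<in>U. \<exists>V. open_Rn n V \<and> u \<in> V \<and> V \<subseteq> U \<and> (n, V, p) \<in> D) \<longrightarrow> (n, U, p) \<in> D) \<and>
     \<comment> \<open>smooth compatibility\<close>
     (\<forall>n U p m V h. (n, U, p) \<in> D \<longrightarrow> euclid_smooth m V n U h \<longrightarrow> (m, V, p \<circ> h) \<in> D)"

definition smooth_map :: "'a set \<Rightarrow> 'a plots \<Rightarrow> 'b set \<Rightarrow> 'b plots \<Rightarrow> ('a \<Rightarrow> 'b) \<Rightarrow> bool" where
  "smooth_map X DX Y DY f \<longleftrightarrow> f ` X \<subseteq> Y \<and> (\<forall>(n, U, p)\<in>DX. (n, U, f \<circ> p) \<in> DY)"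

definition sub_diff :: "'a plots \<Rightarrow> 'a set \<Rightarrow> 'a plots" where
  "sub_diff D A = {(n, U, p). (n, U, p) \<in> D \<and> p ` U \<subseteq> A}"

definition prod_diff :: "'a plots \<Rightarrow> 'b plots \<Rightarrow> ('a \<times> 'b) plots" where
  "prod_diff DX DY = {(n, U, p). (n, U, fst \<circ> p) \<in> DX \<and> (n, U, snd \<circ> p) \<in> DY}"

definition real_diff :: "real plots" where
  "real_diff = {(n, U, p). open_Rn n U \<and> smooth_real n U p}"

definition D_open :: "'a set \<Rightarrow> 'a plots \<Rightarrow> 'a set \<Rightarrow> bool" where
  "D_open X D A \<longleftrightarrow> A \<subseteq> X \<and> (\<forall>(n, U, p)\<in>D. open_Rn n {u\<in>U. p u \<in> A})"

definition D_continuous_real :: "'a set \<Rightarrow> 'a plots \<Rightarrow> ('a \<Rightarrow> real) \<Rightarrow> bool" where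
  "D_continuous_real X D g \<longleftrightarrow> (\<forall>W. open W \<longrightarrow> D_open X D {x\<in>X. g x \<in> W})"

definition fibre :: "'e set \<Rightarrow> ('e \<Rightarrow> 'a) \<Rightarrow> 'a \<Rightarrow> 'e set" where
  "fibre E pr x = {v\<in>E. pr v = x}"

definition vector_pseudo_bundle ::
  "'a set \<Rightarrow> 'a plots \<Rightarrow> 'e set \<Rightarrow> 'e plots \<Rightarrow> ('e \<Rightarrow> 'a) \<Rightarrow>
   ('e \<Rightarrow> 'e \<Rightarrow> 'e) \<Rightarrow> (real \<Rightarrow> 'e \<Rightarrow> 'e) \<Rightarrow> ('a \<Rightarrow> 'e) \<Rightarrow> bool" where
  "vector_pseudo_bundle X DX E DE pr add smul zero \<longleftrightarrow>
     diffeological X DX \<and> diffeological E DE \<and>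
     smooth_map E DE X DX pr \<and>
     (\<forall>x\<in>X. zero x \<in> fibre E pr x) \<and>
     (\<forall>x\<in>X. \<forall>v\<in>fibre E pr x. \<forall>w\<in>fibre E pr x.
        add v w \<in> fibre E pr x \<and> add v w = add w v \<and> add v (zero x) = v) \<and>
     (\<forall>x\<in>X. \<forall>u\<in>fibre E pr x. \<forall>v\<in>fibre E pr x. \<forall>w\<in>fibre E pr x.
        add (add u v) w = add u (add v w)) \<and>
     (\<forall>x\<in>X. \<forall>v\<in>fibre E pr x. \<exists>w\<in>fibre E pr x. add v w = zero x) \<and>
     (\<forall>x\<in>X. \<forall>v\<in>fibre E pr x. \<forall>w\<in>fibre E pr x. \<forall>a b::real.
        smul a v \<in> fibre E pr x \<and> smul 1 v = v \<and> smul a (smul b v) = smul (a * b) v \<and>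
        smul (a + b) v = add (smul a v) (smul b v) \<and> smul a (add v w) = add (smul a v) (smul a w)) \<and>
     \<comment> \<open>smoothness of the operations\<close>
     smooth_map {(v, w). v \<in> E \<and> w \<in> E \<and> pr v = pr w}
        (sub_diff (prod_diff DE DE) {(v, w). v \<in> E \<and> w \<in> E \<and> pr v = pr w})
        E DE (\<lambda>(v, w). add v w) \<and>
     smooth_map (UNIV \<times> E) (prod_diff real_diff DE) E DE (\<lambda>(a, v). smul a v) \<and>
     smooth_map X DX E DE zero"

definition linearization ::
  "'a set \<Rightarrow> 'a plots \<Rightarrow> 'e set \<Rightarrow> 'e plots \<Rightarrow> ('e \<Rightarrow> 'a) \<Rightarrow> ('a \<Rightarrow> 'e) \<Rightarrow> 'e set \<Rightarrow>
   ('a \<times> 'a \<Rightarrow> 'e) \<Rightarrow> ('e \<Rightarrow> 'a \<times> 'a) \<Rightarrow> bool" where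
  "linearization X DX E DE pr zero T \<nu> \<delta> \<longleftrightarrow>
     T \<subseteq> E \<and> zero ` X \<subseteq> T \<and>
     \<comment> \<open>(1)\<close> smooth_map E DE (X \<times> X) (prod_diff DX DX) \<delta> \<and>
     \<comment> \<open>(2)\<close> {v\<in>T. \<delta> v \<in> {(x, x) | x. x \<in> X}} = zero ` X \<and>
        (\<forall>v\<in>E. fst (\<delta> v) = pr v) \<and>
     \<comment> \<open>(3)\<close> smooth_map (X \<times> X) (prod_diff DX DX) E DE \<nu> \<and>
     \<comment> \<open>(4)\<close> (\<forall>x\<in>X. \<forall>y\<in>X. \<nu> (x, y) = zero x \<longleftrightarrow> x = y) \<and>
     \<comment> \<open>(6)\<close> (\<forall>x\<in>X. \<forall>y\<in>X. pr (\<nu> (x, y)) = x)"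

definition assumption_D ::
  "'a set \<Rightarrow> 'e set \<Rightarrow> 'e plots \<Rightarrow> ('e \<Rightarrow> 'a) \<Rightarrow> ('a \<Rightarrow> 'e) \<Rightarrow> ('e \<Rightarrow> real) \<Rightarrow> bool" where
  "assumption_D X E DE pr zero gap \<longleftrightarrow>
     smooth_map (E - zero ` X) (sub_diff DE (E - zero ` X)) UNIV real_diff gap \<and>
     (\<forall>v\<in>E. gap v = 0 \<longleftrightarrow> v = zero (pr v)) \<and>
     D_continuous_real E DE gap \<and>
     bounded (gap ` zero ` X)"

definition fix_pts :: "'a set \<Rightarrow> ('a \<Rightarrow> 'a) \<Rightarrow> 'a set" where
  "fix_pts X f = {x\<in>X. f x = x}"

end

theory Submission
  imports Defs
begin

text \<open>Away from the fixed points, x \<mapsto> \<nu>(x, f x) is a composite of smooth maps that never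
  meets the zero section, because \<nu>(x, y) vanishes only on the diagonal and lies in the
  fibre over x. Hence it is a smooth map into E minus the zero section, where gap is
  smooth by Assumption D.\<close>

lemma smooth_map_id: "smooth_map X D X D id"
  unfolding smooth_map_def by auto

lemma smooth_map_comp:
  assumes "smooth_map X DX Y DY f" and "smooth_map Y DY Z DZ g"
  shows "smooth_map X DX Z DZ (g \<circ> f)"
  using assms unfolding smooth_map_def by (auto simp: comp_assoc)

lemma smooth_map_pair:
  assumes "smooth_map X DX Y DY f" and "smooth_map X DX Z DZ g"
  shows "smooth_map X DX (Y \<times> Z) (prod_diff DY DZ) (\<lambda>x. (f x, g x))"
  using assms unfolding smooth_map_def prod_diff_def by (auto simp: comp_def)

lemma smooth_map_restrict_sub_diff:
  assumes "smooth_map X DX Y DY f" and "A \<subseteq> X" and "f ` A \<subseteq> B"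
  shows "smooth_map A (sub_diff DX A) B (sub_diff DY B) f"
  using assms unfolding smooth_map_def sub_diff_def by (auto simp: image_subset_iff)

lemma smooth_map_graph:
  assumes "smooth_map X D X D f"
  shows "smooth_map X D (X \<times> X) (prod_diff D D) (\<lambda>x. (x, f x))"
  using smooth_map_pair[OF smooth_map_id assms] by simp

lemma vector_pseudo_bundle_pr_zero:
  assumes "vector_pseudo_bundle X DX E DE pr add smul zero" and "x \<in> X"
  shows "pr (zero x) = x"
  using assms unfolding vector_pseudo_bundle_def fibre_def by auto

lemma linearization_off_diagonal:
  assumes lin: "linearization X DX E DE pr zero T \<nu> \<delta>"
    and pr_zero: "\<And>z. z \<in> X \<Longrightarrow> pr (zero z) = z"
    and "x \<in> X" "y \<in> X" "x \<noteq> y"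
  shows "\<nu> (x, y) \<in> E - zero ` X"
proof -
  have "\<nu> (x, y) \<in> E"
    using lin \<open>x \<in> X\<close> \<open>y \<in> X\<close> unfolding linearization_def smooth_map_def by auto
  moreover have "\<nu> (x, y) \<noteq> zero z" if "z \<in> X" for z
  proof
    assume \<nu>_zero: "\<nu> (x, y) = zero z"
    have "z = pr (\<nu> (x, y))" using \<nu>_zero pr_zero \<open>z \<in> X\<close> by simp
    also have "\<dots> = x" using lin \<open>x \<in> X\<close> \<open>y \<in> X\<close> unfolding linearization_def by blast
    finally have "\<nu> (x, y) = zero x" using \<nu>_zero by simp
    then show False
      using lin \<open>x \<in> X\<close> \<open>y \<in> X\<close> \<open>x \<noteq> y\<close> unfolding linearization_def by blast
  qed
  ultimately show ?thesis by blast
qed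

theorem mainTheorem7:
  fixes X :: "'a set" and DX :: "'a plots"
    and E :: "'e set" and DE :: "'e plots"
    and pr :: "'e \<Rightarrow> 'a" and add :: "'e \<Rightarrow> 'e \<Rightarrow> 'e" and smul :: "real \<Rightarrow> 'e \<Rightarrow> 'e"
    and zero :: "'a \<Rightarrow> 'e" and T :: "'e set"
    and \<nu> :: "'a \<times> 'a \<Rightarrow> 'e" and \<delta> :: "'e \<Rightarrow> 'a \<times> 'a"
    and gap :: "'e \<Rightarrow> real" and f :: "'a \<Rightarrow> 'a"
  assumes "vector_pseudo_bundle X DX E DE pr add smul zero"
    and "linearization X DX E DE pr zero T \<nu> \<delta>"
    and "assumption_D X E DE pr zero gap"
    and "smooth_map X DX X DX f"
  shows "smooth_map (X - fix_pts X f) (sub_diff DX (X - fix_pts X f)) UNIV real_diff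
           (\<lambda>x. gap (\<nu> (x, f x)))"
proof -
  let ?M = "X - fix_pts X f" and ?E\<^sub>0 = "E - zero ` X" and ?\<nu>\<^sub>f = "\<lambda>x. \<nu> (x, f x)"
  have "smooth_map X DX (X \<times> X) (prod_diff DX DX) (\<lambda>x. (x, f x))"
    using assms(4) by (rule smooth_map_graph)
  moreover have "smooth_map (X \<times> X) (prod_diff DX DX) E DE \<nu>"
    using assms(2) unfolding linearization_def by blast
  ultimately have "smooth_map X DX E DE ?\<nu>\<^sub>f"
    using smooth_map_comp unfolding comp_def by blast
  moreover have "?\<nu>\<^sub>f x \<in> ?E\<^sub>0" if "x \<in> ?M" for x
  proof (rule linearization_off_diagonal[OF assms(2)])
    show "\<And>z. z \<in> X \<Longrightarrow> pr (zero z) = z" using assms(1) by (rule vector_pseudo_bundle_pr_zero)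
    show "x \<in> X" "x \<noteq> f x" using that unfolding fix_pts_def by auto
    then show "f x \<in> X" using assms(4) unfolding smooth_map_def by blast
  qed
  ultimately have "smooth_map ?M (sub_diff DX ?M) ?E\<^sub>0 (sub_diff DE ?E\<^sub>0) ?\<nu>\<^sub>f"
    by (intro smooth_map_restrict_sub_diff) auto
  moreover have "smooth_map ?E\<^sub>0 (sub_diff DE ?E\<^sub>0) UNIV real_diff gap"
    using assms(3) unfolding assumption_D_def by blast
  ultimately show ?thesis
    using smooth_map_comp unfolding comp_def by blast
qed
end
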